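(* Let $d\geq1$ and let $\varphi:\mathbb R_+\to\mathbb R$ be smooth with compact support contained in $(0,1)$. For $n\geq1$ and $t\geq0$, let $\mathcal G^n_t$ denote the function on $\mathbb R^d$ whose spatial Fourier transform is $\mathcal F_x(\mathcal G^n_t)(\eta)=\mathbf 1_{\{|\eta|\leq n\}}\frac{\sin(t|\eta|)}{|\eta|}$. For $\xi,\tilde\xi\geq0$ and $\eta,\tilde\eta\in\mathbb R^d\setminus\{0\}$, set $$M^n_\varphi((\xi,\eta),(\tilde\xi,\tilde\eta)):=\frac{1}{4|\eta||\tilde\eta|}\int_0^\infty dt\,\varphi(t)\int_0^tdu\,e^{\imath u(\xi-\tilde\xi)}\mathcal F_x(\mathcal G^n_{t-u})(\eta-\tilde\eta)\int_0^uds\,e^{-\imath s(\xi-|\eta|)}\int_0^udr\,e^{\imath r(\tilde\xi-|\tilde\eta|)}.$$ Then there exist functions $R^n_\varphi$ ($n\geq1$) such that for all $n\geq1$, $\xi,\tilde\xi\geq0$ and $\eta,\tilde\eta\in\mathbb R^d\setminus\{0\}$, $$\int_0^\infty dt\,\varphi(t)\int_0^tdu\,e^{\imath u(\xi-\tilde\xi)}\mathcal F_x(\mathcal G^n_{t-u})(\eta-\tilde\eta)\int_0^uds\,e^{-\imath\xi s}\mathcal F_x(\mathcal G^n_s)(\eta)\int_0^udr\,e^{\imath\tilde\xi r}\mathcal F_x(\mathcal G^n_r)(\tilde\eta)$$ $$=\mathbf 1_{\{|\eta|\leq n\}}\mathbf 1_{\{|\tilde\eta|\leq n\}}\Big[M^n_\varphi((\xi,\eta),(\tilde\xi,\tilde\eta))+R^n_\varphi((\xi,\eta),(\tilde\xi,\tilde\eta))\Big],$$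 and, for every $\kappa\in[0,1]$, there is a constant $C$ (independent of $n,\xi,\tilde\xi,\eta,\tilde\eta$) with $$\sup_{n\geq1}\big|R^n_\varphi((\xi,\eta),(\tilde\xi,\tilde\eta))\big|\leq\frac{C}{|\eta||\tilde\eta|}\bigg[\frac{1}{|\xi-|\eta||^\kappa\,|\tilde\xi+|\tilde\eta||}+\frac{1}{|\xi+|\eta||\,|\tilde\xi+|\tilde\eta||}+\frac{1}{|\xi+|\eta||\,|\tilde\xi-|\tilde\eta||^\kappa}\bigg].$$
   Context: Spatial Fourier transform: $\mathcal F_x\psi(\eta)=\int_{\mathbb R^d}e^{-\imath\langle\eta,x\rangle}\psi(x)\,dx$. Terms with a vanishing denominator in the bound are interpreted as $+\infty$. *)

theory Defs
  imports "HOL-Analysis.Analysis"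
begin

definition smooth_on :: "real set \<Rightarrow> (real \<Rightarrow> real) \<Rightarrow> bool" where
  "smooth_on S f \<longleftrightarrow> (\<forall>k::nat. \<forall>x\<in>S. ((deriv ^^ k) f) differentiable (at x))"

text \<open>Spatial Fourier transform of the truncated wave kernel G^n_t at eta:
  1_{|eta| \<le> n} sin(t|eta|)/|eta|, with the value t at eta = 0 (continuous extension).\<close>
definition FG :: "nat \<Rightarrow> real \<Rightarrow> 'a::euclidean_space \<Rightarrow> complex" where
  "FG n t \<eta> = (if norm \<eta> \<le> real n then
       (if \<eta> = 0 then complex_of_real t else complex_of_real (sin (t * norm \<eta>) / norm \<eta>))
     else 0)"

definition ind_le :: "nat \<Rightarrow> 'a::euclidean_space \<Rightarrow> complex" where
  "ind_le n \<eta> = (if norm \<eta> \<le> real n then 1 else 0)"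

definition LHS :: "(real \<Rightarrow> real) \<Rightarrow> nat \<Rightarrow> real \<Rightarrow> 'a::euclidean_space \<Rightarrow> real \<Rightarrow> 'a \<Rightarrow> complex" where
  "LHS \<phi> n \<xi> \<eta> \<xi>' \<eta>' =
     integral {0..} (\<lambda>t. complex_of_real (\<phi> t) *
       integral {0..t} (\<lambda>u. exp (\<i> * complex_of_real (u * (\<xi> - \<xi>'))) * FG n (t - u) (\<eta> - \<eta>') *
         integral {0..u} (\<lambda>s. exp (- \<i> * complex_of_real (\<xi> * s)) * FG n s \<eta>) *
         integral {0..u} (\<lambda>r. exp (\<i> * complex_of_real (\<xi>' * r)) * FG n r \<eta>')))"

definition M :: "(real \<Rightarrow> real) \<Rightarrow> nat \<Rightarrow> real \<Rightarrow> 'a::euclidean_space \<Rightarrow> real \<Rightarrow> 'a \<Rightarrow> complex" where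
  "M \<phi> n \<xi> \<eta> \<xi>' \<eta>' =
     complex_of_real (1 / (4 * norm \<eta> * norm \<eta>')) *
     integral {0..} (\<lambda>t. complex_of_real (\<phi> t) *
       integral {0..t} (\<lambda>u. exp (\<i> * complex_of_real (u * (\<xi> - \<xi>'))) * FG n (t - u) (\<eta> - \<eta>') *
         integral {0..u} (\<lambda>s. exp (- \<i> * complex_of_real (s * (\<xi> - norm \<eta>)))) *
         integral {0..u} (\<lambda>r. exp (\<i> * complex_of_real (r * (\<xi>' - norm \<eta>'))))))"

text \<open>x^kappa for x \<ge> 0 with the convention 0^0 = 1 (Isabelle's powr has 0 powr 0 = 0).\<close>
definition rpow :: "real \<Rightarrow> real \<Rightarrow> real" where
  "rpow x \<kappa> = (if \<kappa> = 0 then 1 else x powr \<kappa>)"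

end

theory Submission
  imports Defs
begin

(* For |eta| <= n the kernel FG n s eta = sin(s|eta|)/|eta| is a difference of two exponentials,
   so each of the inner s- and r-integrals is a combination of oscillatory integrals
   int_0^u e^{ics} ds, which are bounded by min(u, 2/|c|) <= 2/|c|^kappa for u <= 1.
   Multiplying out, the product of the two resonant pieces (frequencies |eta| - xi and
   xi' - |eta'|) is exactly the integrand of M; each of the other three products contains a
   non-resonant factor with frequency xi + |eta| or xi' + |eta'|.  Since |FG_{t-u}| <= t - u <= 1
   and phi is bounded on its support [0,1], the outer integrals only contribute a constant. *)

definition osc_integral :: "real \<Rightarrow> real \<Rightarrow> complex" where
  "osc_integral c u = integral {0..u} (\<lambda>s. exp (\<i> * complex_of_real (c * s)))"

lemma osc_integral_eq:
  assumes "c \<noteq> 0" "0 \<le> u"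
  shows "osc_integral c u = (exp (\<i> * complex_of_real (c * u)) - 1) / (\<i> * complex_of_real c)"
proof -
  have "((\<lambda>s. exp (\<i> * complex_of_real (c * s)) / (\<i> * complex_of_real c)) has_vector_derivative
          exp (\<i> * complex_of_real (c * s))) (at s within {0..u})" for s
  proof -
    have "((\<lambda>z. exp (\<i> * (complex_of_real c * z)) / (\<i> * complex_of_real c)) has_field_derivative
            exp (\<i> * (complex_of_real c * complex_of_real s))) (at (complex_of_real s))"
      using assms(1) by (auto intro!: derivative_eq_intros) (simp add: mult.commute mult.left_commute)
    from has_vector_derivative_real_field[OF this] show ?thesis
      by (auto intro: has_vector_derivative_at_within)
  qed
  then have "((\<lambda>s. exp (\<i> * complex_of_real (c * s))) has_integral
      exp (\<i> * complex_of_real (c * u)) / (\<i> * complex_of_real c)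
      - exp (\<i> * complex_of_real (c * 0)) / (\<i> * complex_of_real c)) {0..u}"
    by (intro fundamental_theorem_of_calculus[OF assms(2)]) auto
  then show ?thesis
    unfolding osc_integral_def by (simp add: integral_unique diff_divide_distrib)
qed

lemma norm_osc_integral_le:
  assumes "0 \<le> u"
  shows "norm (osc_integral c u) \<le> u"
proof -
  have "norm (osc_integral c u) \<le> integral {0..u} (\<lambda>s. 1::real)"
    unfolding osc_integral_def
    by (rule integral_norm_bound_integral) (auto intro!: integrable_continuous_interval continuous_intros)
  then show ?thesis
    using assms by simp
qed

lemma norm_osc_integral_le_inverse:
  assumes "c \<noteq> 0" "0 \<le> u"
  shows "norm (osc_integral c u) \<le> 2 / \<bar>c\<bar>"
proof -
  have "norm (exp (\<i> * complex_of_real (c * u)) - 1) \<le> 2"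
    by (rule order_trans[OF norm_triangle_ineq4]) simp
  then show ?thesis
    using assms by (simp add: osc_integral_eq norm_divide norm_mult divide_right_mono)
qed

lemma norm_osc_integral_le_rpow:
  assumes "0 \<le> u" "u \<le> 1" "0 \<le> \<kappa>" "\<kappa> \<le> 1" "rpow \<bar>c\<bar> \<kappa> \<noteq> 0"
  shows "norm (osc_integral c u) \<le> 2 / rpow \<bar>c\<bar> \<kappa>"
proof (cases "\<kappa> = 0")
  case True
  then show ?thesis
    using norm_osc_integral_le[OF assms(1), of c] assms by (simp add: rpow_def)
next
  case False
  then have "c \<noteq> 0" and rpow_eq: "rpow \<bar>c\<bar> \<kappa> = \<bar>c\<bar> powr \<kappa>"
    using assms(5) by (auto simp: rpow_def)
  then have pos: "\<bar>c\<bar> powr \<kappa> > 0"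
    by simp
  show ?thesis
  proof (cases "\<bar>c\<bar> \<ge> 1")
    case True
    then have "\<bar>c\<bar> powr \<kappa> \<le> \<bar>c\<bar>"
      using powr_mono[of \<kappa> 1 "\<bar>c\<bar>"] assms by simp
    then have "2 / \<bar>c\<bar> \<le> 2 / \<bar>c\<bar> powr \<kappa>"
      using pos by (simp add: frac_le)
    then show ?thesis
      using norm_osc_integral_le_inverse[OF \<open>c \<noteq> 0\<close> assms(1)] rpow_eq by simp
  next
    case False
    then have "\<bar>c\<bar> powr \<kappa> \<le> 1"
      using assms by (intro powr_le1) auto
    then have "1 \<le> 2 / \<bar>c\<bar> powr \<kappa>"
      using pos by (simp add: le_divide_eq)
    then show ?thesis
      using norm_osc_integral_le[OF assms(1), of c] assms unfolding rpow_eq by linarith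
  qed
qed

lemma continuous_on_osc_integral: "continuous_on {0..T} (osc_integral c)"
  unfolding osc_integral_def
  by (rule indefinite_integral_continuous_1) (auto intro!: integrable_continuous_interval continuous_intros)

lemma continuous_on_FG: "continuous_on S (\<lambda>t. FG n t \<delta>)"
  unfolding FG_def by (cases "norm \<delta> \<le> real n"; cases "\<delta> = 0") (simp_all add: continuous_intros)

lemma norm_FG_le: "norm (FG n t \<delta>) \<le> \<bar>t\<bar>"
proof -
  have "\<bar>sin (t * norm \<delta>)\<bar> / norm \<delta> \<le> \<bar>t\<bar>" if "\<delta> \<noteq> 0"
    using abs_sin_x_le_abs_x[of "t * norm \<delta>"] that by (simp add: abs_mult divide_le_eq)
  then show ?thesis
    unfolding FG_def by (auto simp: norm_divide)
qed

lemma FG_eq_0: "\<not> norm \<delta> \<le> real n \<Longrightarrow> FG n t \<delta> = 0"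
  by (simp add: FG_def)

lemma integral_exp_FG:
  assumes "\<delta> \<noteq> 0" "norm \<delta> \<le> real n"
  shows "integral {0..u} (\<lambda>s. exp (\<i> * complex_of_real (c * s)) * FG n s \<delta>)
    = (osc_integral (c + norm \<delta>) u - osc_integral (c - norm \<delta>) u) / (2 * \<i> * complex_of_real (norm \<delta>))"
proof -
  define a where "a = norm \<delta>"
  have "a > 0"
    using assms(1) by (simp add: a_def)
  have "exp (\<i> * complex_of_real (c * s)) * FG n s \<delta>
     = (exp (\<i> * complex_of_real ((c + a) * s)) - exp (\<i> * complex_of_real ((c - a) * s)))
       / (2 * \<i> * complex_of_real a)" for s
  proof -
    have FG_eq: "FG n s \<delta> = complex_of_real (sin (s * a)) / complex_of_real a"
      using assms by (simp add: FG_def a_def)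
    have sin_eq: "complex_of_real (sin (s * a))
        = (exp (\<i> * complex_of_real (s * a)) - exp (- (\<i> * complex_of_real (s * a)))) / (2 * \<i>)"
      by (subst sin_of_real[symmetric]) (rule sin_exp_eq)
    have "exp (\<i> * complex_of_real ((c + a) * s))
        = exp (\<i> * complex_of_real (c * s)) * exp (\<i> * complex_of_real (s * a))"
      and "exp (\<i> * complex_of_real ((c - a) * s))
        = exp (\<i> * complex_of_real (c * s)) * exp (- (\<i> * complex_of_real (s * a)))"
      by (simp_all add: exp_add[symmetric] algebra_simps)
    then show ?thesis
      using \<open>a > 0\<close> unfolding FG_eq sin_eq by (simp add: field_simps)
  qed
  then show ?thesis
    unfolding osc_integral_def a_def[symmetric]
    by (simp add: integral_diff integrable_continuous_interval continuous_intros)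
qed

lemma continuous_on_if_smooth_vanishing_near_0:
  fixes \<phi> :: "real \<Rightarrow> real"
  assumes smooth: "smooth_on {0<..} \<phi>"
    and supp: "0 \<notin> closure {t. 0 \<le> t \<and> \<phi> t \<noteq> 0}"
  shows "continuous_on {0..} \<phi>"
proof -
  have "open (- closure {t. 0 \<le> t \<and> \<phi> t \<noteq> 0})" and "0 \<in> - closure {t. 0 \<le> t \<and> \<phi> t \<noteq> 0}"
    using supp by (simp_all add: open_Compl)
  then obtain \<epsilon> where "\<epsilon> > 0" and \<epsilon>: "ball 0 \<epsilon> \<subseteq> - closure {t. 0 \<le> t \<and> \<phi> t \<noteq> 0}"
    using open_contains_ball_eq by blast
  define e where "e = \<epsilon> / 2"
  have "e > 0" "e < \<epsilon>"
    using \<open>\<epsilon> > 0\<close> by (auto simp: e_def)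
  have vanish: "\<phi> t = 0" if "0 \<le> t" "t \<le> e" for t
  proof (rule ccontr)
    assume "\<phi> t \<noteq> 0"
    then have "t \<in> closure {t. 0 \<le> t \<and> \<phi> t \<noteq> 0}"
      using that closure_subset[of "{t. 0 \<le> t \<and> \<phi> t \<noteq> 0}"] by blast
    moreover have "t \<in> ball 0 \<epsilon>"
      using that \<open>e < \<epsilon>\<close> by simp
    ultimately show False
      using \<epsilon> by blast
  qed
  have "continuous_on {0..e} \<phi>"
    by (rule continuous_on_eq[OF continuous_on_const]) (simp add: vanish)
  moreover have "continuous_on {e..} \<phi>"
  proof (intro continuous_at_imp_continuous_on ballI)
    fix x :: real
    assume "x \<in> {e..}"
    then have "x \<in> {0<..}"
      using \<open>e > 0\<close> by simp
    then have "(deriv ^^ 0) \<phi> differentiable (at x)"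
      using smooth unfolding smooth_on_def by blast
    then show "isCont \<phi> x"
      by (simp add: differentiable_imp_continuous_within)
  qed
  ultimately have "continuous_on ({0..e} \<union> {e..}) \<phi>"
    by (intro continuous_on_closed_Un) auto
  moreover have "{0..e} \<union> {e..} = {0::real..}"
    using \<open>e > 0\<close> by auto
  ultimately show ?thesis
    by simp
qed

lemma eq_0_beyond_support:
  fixes \<phi> :: "real \<Rightarrow> 'a::zero"
  assumes "closure {t. 0 \<le> t \<and> \<phi> t \<noteq> 0} \<subseteq> {..<T}" "T \<le> t" "0 \<le> T"
  shows "\<phi> t = 0"
proof (rule ccontr)
  assume "\<phi> t \<noteq> 0"
  then have "t \<in> closure {t. 0 \<le> t \<and> \<phi> t \<noteq> 0}"
    using assms(2,3) closure_subset[of "{t. 0 \<le> t \<and> \<phi> t \<noteq> 0}"] by auto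
  then show False
    using assms(1,2) by auto
qed

lemma integral_atLeast_eq_atLeastAtMost:
  fixes f :: "real \<Rightarrow> 'a::banach"
  assumes "\<And>t. b < t \<Longrightarrow> f t = 0"
  shows "integral {a..} f = integral {a..b} f"
proof -
  have "integral {a..} f = integral {a..} (\<lambda>t. if t \<in> {a..b} then f t else 0)"
    using assms by (intro integral_cong) auto
  also have "\<dots> = integral ({a..b} \<inter> {a..}) f"
    by (rule integral_restrict_Int)
  also have "{a..b} \<inter> {a..} = {a..b}"
    by auto
  finally show ?thesis .
qed

lemma continuous_on_integral_upto_param:
  fixes F :: "real \<Rightarrow> real \<Rightarrow> 'a::banach"
  assumes "continuous_on ({0..T} \<times> {0..T}) (\<lambda>(t, u). F t u)"
  shows "continuous_on {0..T} (\<lambda>t. integral {0..t} (F t))"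
proof -
  \<comment> \<open>The substitution u = t v moves the dependence on t from the domain into the integrand.\<close>
  have rescale: "integral {0..t} (F t) = t *\<^sub>R integral {0..1} (\<lambda>v. F t (t * v))" if "0 < t" for t
  proof -
    have "(\<lambda>x. x / t) ` {0..t} = {0..1}"
    proof
      show "(\<lambda>x. x / t) ` {0..t} \<subseteq> {0..1}"
        using that by (auto simp: divide_le_eq)
      show "{0..1} \<subseteq> (\<lambda>x. x / t) ` {0..t}"
      proof
        fix v :: real
        assume "v \<in> {0..1}"
        then have "v = (t * v) / t" "t * v \<in> {0..t}"
          using that by (auto simp: mult_le_cancel_left1)
        then show "v \<in> (\<lambda>x. x / t) ` {0..t}"
          by blast
      qed
    qed
    then show ?thesis
      using integral_stretch_real[of t 0 t "F t"] that by simp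
  qed
  have "continuous_on ({0..T} \<times> cbox 0 1) (\<lambda>p. (\<lambda>(t, u). F t u) (fst p, fst p * snd p))"
  proof (rule continuous_on_compose2[OF assms])
    show "continuous_on ({0..T} \<times> cbox 0 1) (\<lambda>p::real \<times> real. (fst p, fst p * snd p))"
      by (intro continuous_intros)
    show "(\<lambda>p. (fst p, fst p * snd p)) ` ({0..T} \<times> cbox 0 1) \<subseteq> {0..T} \<times> {0..T}"
    proof clarsimp
      fix t v :: real
      assume "0 \<le> t" "t \<le> T" "0 \<le> v" "v \<le> 1"
      then show "t * v \<le> T"
        using mult_left_le[of v t] by linarith
    qed
  qed
  then have "continuous_on ({0..T} \<times> cbox 0 1) (\<lambda>(t, v). F t (t * v))"
    by (simp add: case_prod_beta)
  then have "continuous_on {0..T} (\<lambda>t. t *\<^sub>R integral (cbox 0 1) (\<lambda>v. F t (t * v)))"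
    by (intro continuous_intros integral_continuous_on_param)
  then show ?thesis
    by (rule continuous_on_eq) (auto simp: rescale less_eq_real_def)
qed

definition volterra_pairing ::
    "(real \<Rightarrow> real) \<Rightarrow> (real \<Rightarrow> real \<Rightarrow> complex) \<Rightarrow> (real \<Rightarrow> complex) \<Rightarrow> complex" where
  "volterra_pairing \<phi> K Q = integral {0..} (\<lambda>t. complex_of_real (\<phi> t) * integral {0..t} (\<lambda>u. K t u * Q u))"

context
  fixes \<phi> :: "real \<Rightarrow> real" and K :: "real \<Rightarrow> real \<Rightarrow> complex"
  assumes \<phi>_cont: "continuous_on {0..1} \<phi>"
    and \<phi>_vanish: "\<And>t. 1 < t \<Longrightarrow> \<phi> t = 0"
    and K_cont: "continuous_on ({0..1} \<times> {0..1}) (\<lambda>(t, u). K t u)"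
begin

lemma volterra_integrand_integrable:
  assumes "continuous_on {0..1} Q" "t \<in> {0..1}"
  shows "(\<lambda>u. K t u * Q u) integrable_on {0..t}"
proof -
  have "continuous_on {0..1} (\<lambda>u. (\<lambda>(t, u). K t u) (t, u))"
    by (rule continuous_on_compose2[OF K_cont])
      (use assms(2) in \<open>auto intro!: continuous_on_Pair continuous_on_const continuous_on_id\<close>)
  then show ?thesis
    using assms by (intro integrable_continuous_interval continuous_intros)
      (auto elim!: continuous_on_subset)
qed

lemma volterra_pairing_integrand_integrable:
  assumes "continuous_on {0..1} Q"
  shows "(\<lambda>t. complex_of_real (\<phi> t) * integral {0..t} (\<lambda>u. K t u * Q u)) integrable_on {0..1}"
proof -
  have "continuous_on ({0..1} \<times> {0..1}) (\<lambda>p. Q (snd p))"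
    by (rule continuous_on_compose2[OF assms continuous_on_snd]) auto
  then have "continuous_on ({0..1} \<times> {0..1}) (\<lambda>(t, u). K t u * Q u)"
    using K_cont by (auto intro!: continuous_intros simp: case_prod_beta)
  then show ?thesis
    by (intro integrable_continuous_interval continuous_intros \<phi>_cont continuous_on_integral_upto_param)
qed

lemma volterra_pairing_eq_integral_01:
  "volterra_pairing \<phi> K Q = integral {0..1} (\<lambda>t. complex_of_real (\<phi> t) * integral {0..t} (\<lambda>u. K t u * Q u))"
  unfolding volterra_pairing_def by (rule integral_atLeast_eq_atLeastAtMost) (simp add: \<phi>_vanish)

lemma volterra_pairing_diff:
  assumes "continuous_on {0..1} Q\<^sub>1" "continuous_on {0..1} Q\<^sub>2"
  shows "volterra_pairing \<phi> K (\<lambda>u. Q\<^sub>1 u - Q\<^sub>2 u) = volterra_pairing \<phi> K Q\<^sub>1 - volterra_pairing \<phi> K Q\<^sub>2"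
proof -
  have inner: "integral {0..t} (\<lambda>u. K t u * Q\<^sub>1 u - K t u * Q\<^sub>2 u)
      = integral {0..t} (\<lambda>u. K t u * Q\<^sub>1 u) - integral {0..t} (\<lambda>u. K t u * Q\<^sub>2 u)"
    if "t \<in> {0..1}" for t
    using volterra_integrand_integrable[OF assms(1) that] volterra_integrand_integrable[OF assms(2) that]
    by (rule integral_diff)
  have "volterra_pairing \<phi> K (\<lambda>u. Q\<^sub>1 u - Q\<^sub>2 u)
      = integral {0..1} (\<lambda>t. complex_of_real (\<phi> t) * integral {0..t} (\<lambda>u. K t u * Q\<^sub>1 u)
          - complex_of_real (\<phi> t) * integral {0..t} (\<lambda>u. K t u * Q\<^sub>2 u))"
    unfolding volterra_pairing_eq_integral_01
    by (intro integral_cong) (simp add: right_diff_distrib inner)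
  also have "\<dots> = volterra_pairing \<phi> K Q\<^sub>1 - volterra_pairing \<phi> K Q\<^sub>2"
    unfolding volterra_pairing_eq_integral_01
    by (intro integral_diff volterra_pairing_integrand_integrable assms)
  finally show ?thesis .
qed

lemma norm_volterra_pairing_le:
  assumes Q_cont: "continuous_on {0..1} Q"
    and \<phi>_le: "\<And>t. t \<in> {0..1} \<Longrightarrow> \<bar>\<phi> t\<bar> \<le> \<Phi>"
    and K_le: "\<And>t u. 0 \<le> u \<Longrightarrow> u \<le> t \<Longrightarrow> t \<le> 1 \<Longrightarrow> norm (K t u) \<le> 1"
    and Q_le: "\<And>u. u \<in> {0..1} \<Longrightarrow> norm (Q u) \<le> B"
  shows "norm (volterra_pairing \<phi> K Q) \<le> \<Phi> * B"
proof -
  have "B \<ge> 0"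
    using order_trans[OF norm_ge_zero Q_le[of 0]] by simp
  have inner_le: "norm (integral {0..t} (\<lambda>u. K t u * Q u)) \<le> B" if t: "t \<in> {0..1}" for t
  proof -
    have "norm (K t u * Q u) \<le> B" if "u \<in> {0..t}" for u
    proof -
      have "norm (K t u * Q u) = norm (K t u) * norm (Q u)"
        by (simp add: norm_mult)
      also have "\<dots> \<le> 1 * B"
        using K_le[of u t] Q_le[of u] t that by (intro mult_mono) simp_all
      finally show ?thesis
        by simp
    qed
    then have "norm (integral {0..t} (\<lambda>u. K t u * Q u)) \<le> B * t"
      using integrable_bound[OF \<open>B \<ge> 0\<close>, where f="\<lambda>u. K t u * Q u" and a=0 and b=t]
        volterra_integrand_integrable[OF Q_cont t] t
      by simp
    also have "\<dots> \<le> B"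
      using t \<open>B \<ge> 0\<close> by (simp add: mult_left_le)
    finally show ?thesis .
  qed
  have "norm (volterra_pairing \<phi> K Q) \<le> integral {0..1::real} (\<lambda>t. \<Phi> * B)"
    unfolding volterra_pairing_eq_integral_01
  proof (rule integral_norm_bound_integral)
    show "(\<lambda>t. complex_of_real (\<phi> t) * integral {0..t} (\<lambda>u. K t u * Q u)) integrable_on {0..1}"
      by (rule volterra_pairing_integrand_integrable[OF Q_cont])
    show "(\<lambda>t. \<Phi> * B) integrable_on {0..1::real}"
      by (intro integrable_continuous_interval continuous_intros)
    show "norm (complex_of_real (\<phi> t) * integral {0..t} (\<lambda>u. K t u * Q u)) \<le> \<Phi> * B"
      if "t \<in> {0..1}" for t
      unfolding norm_mult norm_of_real
      using \<phi>_le[OF that] inner_le[OF that] \<open>B \<ge> 0\<close> by (intro mult_mono) simp_all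
  qed
  then show ?thesis
    by simp
qed

end

definition wave_kernel :: "nat \<Rightarrow> real \<Rightarrow> 'a::euclidean_space \<Rightarrow> real \<Rightarrow> real \<Rightarrow> complex" where
  "wave_kernel n \<omega> \<delta> t u = exp (\<i> * complex_of_real (u * \<omega>)) * FG n (t - u) \<delta>"

lemma continuous_on_wave_kernel: "continuous_on S (\<lambda>(t, u). wave_kernel n \<omega> \<delta> t u)"
proof -
  have "continuous_on S (\<lambda>p. FG n (fst p - snd p) \<delta>)"
    by (rule continuous_on_compose2[OF continuous_on_FG[of UNIV]]) (auto intro!: continuous_intros)
  then show ?thesis
    unfolding wave_kernel_def case_prod_beta by (intro continuous_intros)
qed

lemma norm_wave_kernel_le:
  assumes "u \<le> t" "t - u \<le> 1"
  shows "norm (wave_kernel n \<omega> \<delta> t u) \<le> 1"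
  using norm_FG_le[of n "t - u" \<delta>] assms by (simp add: wave_kernel_def norm_mult)

lemma LHS_eq_volterra_pairing:
  "LHS \<phi> n \<xi> \<eta> \<xi>' \<eta>' = volterra_pairing \<phi> (wave_kernel n (\<xi> - \<xi>') (\<eta> - \<eta>'))
     (\<lambda>u. integral {0..u} (\<lambda>s. exp (\<i> * complex_of_real ((- \<xi>) * s)) * FG n s \<eta>)
        * integral {0..u} (\<lambda>r. exp (\<i> * complex_of_real (\<xi>' * r)) * FG n r \<eta>'))"
  unfolding LHS_def volterra_pairing_def wave_kernel_def by (simp add: mult.assoc)

lemma M_eq_volterra_pairing:
  "M \<phi> n \<xi> \<eta> \<xi>' \<eta>' = complex_of_real (1 / (4 * norm \<eta> * norm \<eta>'))
     * volterra_pairing \<phi> (wave_kernel n (\<xi> - \<xi>') (\<eta> - \<eta>'))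
         (\<lambda>u. osc_integral (- \<xi> + norm \<eta>) u * osc_integral (\<xi>' - norm \<eta>') u)"
proof -
  have "integral {0..u} (\<lambda>s. exp (- \<i> * complex_of_real (s * (\<xi> - norm \<eta>))))
      = osc_integral (- \<xi> + norm \<eta>) u" for u
    unfolding osc_integral_def by (intro integral_cong arg_cong[where f = exp]) (simp add: algebra_simps)
  moreover have "integral {0..u} (\<lambda>r. exp (\<i> * complex_of_real (r * (\<xi>' - norm \<eta>'))))
      = osc_integral (\<xi>' - norm \<eta>') u" for u
    unfolding osc_integral_def by (intro integral_cong arg_cong[where f = exp]) (simp add: algebra_simps)
  ultimately show ?thesis
    unfolding M_def volterra_pairing_def wave_kernel_def by (simp add: mult.assoc)
qed

lemma LHS_eq_0_outside_ball:
  assumes "\<not> (norm \<eta> \<le> real n \<and> norm \<eta>' \<le> real n)"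
  shows "LHS \<phi> n \<xi> \<eta> \<xi>' \<eta>' = 0"
  using assms by (auto simp: LHS_def FG_eq_0)

(* x w is the resonant product that M keeps; every other term contains y or z. *)
lemma sine_product_split:
  fixes x y z w :: complex and a b :: real
  assumes "a \<noteq> 0" "b \<noteq> 0"
  shows "(x - y) / (2 * \<i> * complex_of_real a) * ((z - w) / (2 * \<i> * complex_of_real b))
    - complex_of_real (1 / (4 * a * b)) * (x * w)
    = - complex_of_real (1 / (4 * a * b)) * (x * z - y * z + y * w)"
  using assms by (simp add: field_simps)

lemma norm_cross_terms_le:
  fixes x y z w :: complex
  assumes "norm x \<le> 2 / \<alpha>" "norm y \<le> 2 / \<beta>" "norm z \<le> 2 / \<gamma>" "norm w \<le> 2 / \<delta>"
  shows "norm (x * z - y * z + y * w) \<le> 4 * (1 / (\<alpha> * \<gamma>) + 1 / (\<beta> * \<gamma>) + 1 / (\<beta> * \<delta>))"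
proof -
  have "0 \<le> 2 / \<alpha>" "0 \<le> 2 / \<beta>"
    using order_trans[OF norm_ge_zero assms(1)] order_trans[OF norm_ge_zero assms(2)] .
  have "norm (x * z - y * z + y * w) \<le> norm x * norm z + norm y * norm z + norm y * norm w"
    by (rule order_trans[OF norm_triangle_ineq add_mono[OF order_trans[OF norm_triangle_ineq4]]])
      (simp_all add: norm_mult)
  also have "\<dots> \<le> 2 / \<alpha> * (2 / \<gamma>) + 2 / \<beta> * (2 / \<gamma>) + 2 / \<beta> * (2 / \<delta>)"
    using assms \<open>0 \<le> 2 / \<alpha>\<close> \<open>0 \<le> 2 / \<beta>\<close> by (intro add_mono mult_mono) simp_all
  also have "\<dots> = 4 * (1 / (\<alpha> * \<gamma>) + 1 / (\<beta> * \<gamma>) + 1 / (\<beta> * \<delta>))"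
    by (simp add: field_simps)
  finally show ?thesis .
qed

lemma norm_osc_cross_terms_le:
  assumes "0 \<le> u" "u \<le> 1" "0 \<le> \<kappa>" "\<kappa> \<le> 1" "0 \<le> \<xi>" "0 \<le> \<xi>'" "0 < a" "0 < b"
    and "rpow \<bar>\<xi> - a\<bar> \<kappa> \<noteq> 0" "rpow \<bar>\<xi>' - b\<bar> \<kappa> \<noteq> 0"
  shows "norm (osc_integral (- \<xi> + a) u * osc_integral (\<xi>' + b) u
      - osc_integral (- \<xi> - a) u * osc_integral (\<xi>' + b) u
      + osc_integral (- \<xi> - a) u * osc_integral (\<xi>' - b) u)
    \<le> 4 * (1 / (rpow \<bar>\<xi> - a\<bar> \<kappa> * \<bar>\<xi>' + b\<bar>) + 1 / (\<bar>\<xi> + a\<bar> * \<bar>\<xi>' + b\<bar>)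
      + 1 / (\<bar>\<xi> + a\<bar> * rpow \<bar>\<xi>' - b\<bar> \<kappa>))"
proof (rule norm_cross_terms_le)
  show "norm (osc_integral (- \<xi> + a) u) \<le> 2 / rpow \<bar>\<xi> - a\<bar> \<kappa>"
    using norm_osc_integral_le_rpow[of u \<kappa> "- \<xi> + a"] assms by (simp add: abs_minus_commute)
  show "norm (osc_integral (- \<xi> - a) u) \<le> 2 / \<bar>\<xi> + a\<bar>"
    using norm_osc_integral_le_inverse[of "- \<xi> - a" u] assms by (simp add: abs_minus_commute add.commute)
  show "norm (osc_integral (\<xi>' + b) u) \<le> 2 / \<bar>\<xi>' + b\<bar>"
    using norm_osc_integral_le_inverse[of "\<xi>' + b" u] assms by simp
  show "norm (osc_integral (\<xi>' - b) u) \<le> 2 / rpow \<bar>\<xi>' - b\<bar> \<kappa>"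
    using norm_osc_integral_le_rpow[of u \<kappa> "\<xi>' - b"] assms by simp
qed

definition remainder_bound :: "real \<Rightarrow> real \<Rightarrow> 'a::real_normed_vector \<Rightarrow> real \<Rightarrow> 'a \<Rightarrow> real" where
  "remainder_bound \<kappa> \<xi> \<eta> \<xi>' \<eta>' =
     1 / (rpow \<bar>\<xi> - norm \<eta>\<bar> \<kappa> * \<bar>\<xi>' + norm \<eta>'\<bar>)
     + 1 / (\<bar>\<xi> + norm \<eta>\<bar> * \<bar>\<xi>' + norm \<eta>'\<bar>)
     + 1 / (\<bar>\<xi> + norm \<eta>\<bar> * rpow \<bar>\<xi>' - norm \<eta>'\<bar> \<kappa>)"

lemma remainder_bound_nonneg: "0 \<le> remainder_bound \<kappa> \<xi> \<eta> \<xi>' \<eta>'"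
  by (simp add: remainder_bound_def rpow_def)

lemma LHS_minus_M_eq_volterra_pairing:
  fixes \<eta> \<eta>' :: "'a::euclidean_space"
  assumes \<phi>_cont: "continuous_on {0..1} \<phi>" and \<phi>_vanish: "\<And>t. 1 < t \<Longrightarrow> \<phi> t = 0"
    and \<eta>: "\<eta> \<noteq> 0" "\<eta>' \<noteq> 0" and ball: "norm \<eta> \<le> real n" "norm \<eta>' \<le> real n"
  defines "a \<equiv> norm \<eta>" and "b \<equiv> norm \<eta>'"
  shows "LHS \<phi> n \<xi> \<eta> \<xi>' \<eta>' - M \<phi> n \<xi> \<eta> \<xi>' \<eta>'
    = volterra_pairing \<phi> (wave_kernel n (\<xi> - \<xi>') (\<eta> - \<eta>'))
        (\<lambda>u. - complex_of_real (1 / (4 * a * b)) *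
          (osc_integral (- \<xi> + a) u * osc_integral (\<xi>' + b) u
           - osc_integral (- \<xi> - a) u * osc_integral (\<xi>' + b) u
           + osc_integral (- \<xi> - a) u * osc_integral (\<xi>' - b) u))"
proof -
  have "a > 0" "b > 0"
    using \<eta> by (simp_all add: a_def b_def)
  define K where "K = wave_kernel n (\<xi> - \<xi>') (\<eta> - \<eta>')"
  define c where "c = complex_of_real (1 / (4 * a * b))"
  define Am Ap Bp Bm where "Am = osc_integral (- \<xi> + a)" and "Ap = osc_integral (- \<xi> - a)"
    and "Bp = osc_integral (\<xi>' + b)" and "Bm = osc_integral (\<xi>' - b)"
  have LHS_eq: "LHS \<phi> n \<xi> \<eta> \<xi>' \<eta>'
      = volterra_pairing \<phi> K (\<lambda>u. (Am u - Ap u) / (2 * \<i> * complex_of_real a)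
          * ((Bp u - Bm u) / (2 * \<i> * complex_of_real b)))"
    unfolding LHS_eq_volterra_pairing integral_exp_FG[OF \<eta>(1) ball(1)] integral_exp_FG[OF \<eta>(2) ball(2)]
    by (simp add: K_def Am_def Ap_def Bp_def Bm_def a_def b_def)
  have M_eq: "M \<phi> n \<xi> \<eta> \<xi>' \<eta>' = volterra_pairing \<phi> K (\<lambda>u. c * (Am u * Bm u))"
    unfolding M_eq_volterra_pairing
    by (simp add: volterra_pairing_def mult.left_commute K_def Am_def Bm_def c_def a_def b_def)
  have "continuous_on {0..1} Am" "continuous_on {0..1} Ap" "continuous_on {0..1} Bp" "continuous_on {0..1} Bm"
    by (simp_all add: Am_def Ap_def Bp_def Bm_def continuous_on_osc_integral)
  then have Q_cont: "continuous_on {0..1} (\<lambda>u. (Am u - Ap u) / (2 * \<i> * complex_of_real a)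
          * ((Bp u - Bm u) / (2 * \<i> * complex_of_real b)))"
    "continuous_on {0..1} (\<lambda>u. c * (Am u * Bm u))"
    using \<open>a > 0\<close> \<open>b > 0\<close> by (auto intro!: continuous_intros)
  have K_cont: "continuous_on ({0..1} \<times> {0..1}) (\<lambda>(t, u). K t u)"
    unfolding K_def by (rule continuous_on_wave_kernel)
  have "LHS \<phi> n \<xi> \<eta> \<xi>' \<eta>' - M \<phi> n \<xi> \<eta> \<xi>' \<eta>'
      = volterra_pairing \<phi> K (\<lambda>u. (Am u - Ap u) / (2 * \<i> * complex_of_real a)
          * ((Bp u - Bm u) / (2 * \<i> * complex_of_real b)) - c * (Am u * Bm u))"
    unfolding LHS_eq M_eq
    by (rule volterra_pairing_diff[OF \<phi>_cont _ K_cont Q_cont, symmetric]) (rule \<phi>_vanish)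
  also have "\<dots> = volterra_pairing \<phi> K (\<lambda>u. - c * (Am u * Bp u - Ap u * Bp u + Ap u * Bm u))"
    using \<open>a > 0\<close> \<open>b > 0\<close> by (simp only: c_def sine_product_split)
  finally show ?thesis
    by (simp only: K_def c_def Am_def Ap_def Bp_def Bm_def)
qed

lemma norm_LHS_minus_M_le:
  fixes \<eta> \<eta>' :: "'a::euclidean_space"
  assumes \<phi>_cont: "continuous_on {0..1} \<phi>" and \<phi>_vanish: "\<And>t. 1 < t \<Longrightarrow> \<phi> t = 0"
    and \<phi>_le: "\<And>t. t \<in> {0..1} \<Longrightarrow> \<bar>\<phi> t\<bar> \<le> \<Phi>"
    and \<xi>: "0 \<le> \<xi>" "0 \<le> \<xi>'" and \<eta>: "\<eta> \<noteq> 0" "\<eta>' \<noteq> 0"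
    and ball: "norm \<eta> \<le> real n" "norm \<eta>' \<le> real n"
    and \<kappa>: "0 \<le> \<kappa>" "\<kappa> \<le> 1"
    and resonant: "rpow \<bar>\<xi> - norm \<eta>\<bar> \<kappa> \<noteq> 0" "rpow \<bar>\<xi>' - norm \<eta>'\<bar> \<kappa> \<noteq> 0"
  shows "norm (LHS \<phi> n \<xi> \<eta> \<xi>' \<eta>' - M \<phi> n \<xi> \<eta> \<xi>' \<eta>')
    \<le> \<Phi> / (norm \<eta> * norm \<eta>') * remainder_bound \<kappa> \<xi> \<eta> \<xi>' \<eta>'"
proof -
  define a b where "a = norm \<eta>" and "b = norm \<eta>'"
  have "a > 0" "b > 0"
    using \<eta> by (simp_all add: a_def b_def)
  let ?X = "\<lambda>u. osc_integral (- \<xi> + a) u * osc_integral (\<xi>' + b) u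
    - osc_integral (- \<xi> - a) u * osc_integral (\<xi>' + b) u
    + osc_integral (- \<xi> - a) u * osc_integral (\<xi>' - b) u"
  have "norm (- complex_of_real (1 / (4 * a * b)) * ?X u) \<le> remainder_bound \<kappa> \<xi> \<eta> \<xi>' \<eta>' / (a * b)"
    if "u \<in> {0..1}" for u
  proof -
    have "norm (- complex_of_real (1 / (4 * a * b)) * ?X u) = norm (?X u) / (4 * a * b)"
      using \<open>a > 0\<close> \<open>b > 0\<close> by (simp add: norm_mult norm_divide)
    also have "\<dots> \<le> 4 * remainder_bound \<kappa> \<xi> \<eta> \<xi>' \<eta>' / (4 * a * b)"
      unfolding remainder_bound_def a_def[symmetric] b_def[symmetric]
      using that \<kappa> \<xi> \<open>a > 0\<close> \<open>b > 0\<close> resonant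
      by (intro divide_right_mono norm_osc_cross_terms_le) (simp_all add: a_def b_def)
    finally show ?thesis
      by simp
  qed
  then have "norm (volterra_pairing \<phi> (wave_kernel n (\<xi> - \<xi>') (\<eta> - \<eta>'))
      (\<lambda>u. - complex_of_real (1 / (4 * a * b)) * ?X u)) \<le> \<Phi> * (remainder_bound \<kappa> \<xi> \<eta> \<xi>' \<eta>' / (a * b))"
    using \<open>a > 0\<close> \<open>b > 0\<close>
    by (intro norm_volterra_pairing_le[OF \<phi>_cont _ continuous_on_wave_kernel] \<phi>_vanish \<phi>_le)
      (auto simp: norm_wave_kernel_le intro!: continuous_intros continuous_on_osc_integral)
  then show ?thesis
    using \<phi>_vanish by (simp add: LHS_minus_M_eq_volterra_pairing[OF \<phi>_cont _ \<eta> ball] a_def b_def)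
qed

definition wave_remainder ::
    "(real \<Rightarrow> real) \<Rightarrow> nat \<Rightarrow> real \<Rightarrow> 'a::euclidean_space \<Rightarrow> real \<Rightarrow> 'a \<Rightarrow> complex" where
  "wave_remainder \<phi> n \<xi> \<eta> \<xi>' \<eta>' =
     (if norm \<eta> \<le> real n \<and> norm \<eta>' \<le> real n then LHS \<phi> n \<xi> \<eta> \<xi>' \<eta>' - M \<phi> n \<xi> \<eta> \<xi>' \<eta>' else 0)"

lemma LHS_eq_wave_remainder:
  "LHS \<phi> n \<xi> \<eta> \<xi>' \<eta>' = ind_le n \<eta> * ind_le n \<eta>' * (M \<phi> n \<xi> \<eta> \<xi>' \<eta>' + wave_remainder \<phi> n \<xi> \<eta> \<xi>' \<eta>')"
  by (auto simp: wave_remainder_def ind_le_def LHS_eq_0_outside_ball)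

lemma norm_wave_remainder_le:
  fixes \<eta> \<eta>' :: "'a::euclidean_space"
  assumes \<phi>_cont: "continuous_on {0..1} \<phi>" and \<phi>_vanish: "\<And>t. 1 < t \<Longrightarrow> \<phi> t = 0"
    and \<phi>_le: "\<And>t. t \<in> {0..1} \<Longrightarrow> \<bar>\<phi> t\<bar> \<le> \<Phi>"
    and "0 \<le> \<xi>" "0 \<le> \<xi>'" "\<eta> \<noteq> 0" "\<eta>' \<noteq> 0" "0 \<le> \<kappa>" "\<kappa> \<le> 1"
    and "rpow \<bar>\<xi> - norm \<eta>\<bar> \<kappa> \<noteq> 0" "rpow \<bar>\<xi>' - norm \<eta>'\<bar> \<kappa> \<noteq> 0"
  shows "norm (wave_remainder \<phi> n \<xi> \<eta> \<xi>' \<eta>')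
    \<le> \<Phi> / (norm \<eta> * norm \<eta>') * remainder_bound \<kappa> \<xi> \<eta> \<xi>' \<eta>'"
proof (cases "norm \<eta> \<le> real n \<and> norm \<eta>' \<le> real n")
  case True
  then show ?thesis
    unfolding wave_remainder_def if_P[OF True] using assms
    by (intro norm_LHS_minus_M_le[OF \<phi>_cont _ \<phi>_le] \<phi>_vanish) auto
next
  case False
  have "0 \<le> \<Phi>"
    using order_trans[OF abs_ge_zero \<phi>_le[of 0]] by simp
  then show ?thesis
    unfolding wave_remainder_def if_not_P[OF False] by (simp add: remainder_bound_nonneg)
qed

theorem lemma4p2:
  fixes \<phi> :: "real \<Rightarrow> real"
  assumes smooth: "smooth_on {0<..} \<phi>"
    and supp: "closure {t. 0 \<le> t \<and> \<phi> t \<noteq> 0} \<subseteq> {0<..<1}"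
  shows "\<exists>R :: nat \<Rightarrow> real \<Rightarrow> 'a::euclidean_space \<Rightarrow> real \<Rightarrow> 'a \<Rightarrow> complex.
     (\<forall>n \<xi> \<eta> \<xi>' \<eta>'. n \<ge> 1 \<longrightarrow> \<xi> \<ge> 0 \<longrightarrow> \<xi>' \<ge> 0 \<longrightarrow> \<eta> \<noteq> 0 \<longrightarrow> \<eta>' \<noteq> 0 \<longrightarrow>
        LHS \<phi> n \<xi> \<eta> \<xi>' \<eta>' =
          ind_le n \<eta> * ind_le n \<eta>' * (M \<phi> n \<xi> \<eta> \<xi>' \<eta>' + R n \<xi> \<eta> \<xi>' \<eta>'))
   \<and> (\<forall>\<kappa>::real. 0 \<le> \<kappa> \<and> \<kappa> \<le> 1 \<longrightarrow>
        (\<exists>C::real. \<forall>n \<xi> \<eta> \<xi>' \<eta>'. n \<ge> 1 \<longrightarrow> \<xi> \<ge> 0 \<longrightarrow> \<xi>' \<ge> 0 \<longrightarrow> \<eta> \<noteq> 0 \<longrightarrow> \<eta>' \<noteq> 0 \<longrightarrow>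
           rpow \<bar>\<xi> - norm \<eta>\<bar> \<kappa> \<noteq> 0 \<longrightarrow> rpow \<bar>\<xi>' - norm \<eta>'\<bar> \<kappa> \<noteq> 0 \<longrightarrow>
           norm (R n \<xi> \<eta> \<xi>' \<eta>') \<le>
             C / (norm \<eta> * norm \<eta>') *
               (1 / (rpow \<bar>\<xi> - norm \<eta>\<bar> \<kappa> * \<bar>\<xi>' + norm \<eta>'\<bar>)
                + 1 / (\<bar>\<xi> + norm \<eta>\<bar> * \<bar>\<xi>' + norm \<eta>'\<bar>)
                + 1 / (\<bar>\<xi> + norm \<eta>\<bar> * rpow \<bar>\<xi>' - norm \<eta>'\<bar> \<kappa>))))"
proof -
  have "continuous_on {0..} \<phi>"
    using supp by (intro continuous_on_if_smooth_vanishing_near_0[OF smooth]) auto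
  then have \<phi>_cont: "continuous_on {0..1} \<phi>"
    by (rule continuous_on_subset) auto
  have \<phi>_vanish: "\<phi> t = 0" if "1 < t" for t
    using supp that by (intro eq_0_beyond_support[of \<phi> 1]) auto
  obtain \<Phi> where \<phi>_le: "\<And>t. t \<in> {0..1} \<Longrightarrow> \<bar>\<phi> t\<bar> \<le> \<Phi>"
    using compact_imp_bounded[OF compact_continuous_image[OF \<phi>_cont]] unfolding bounded_real by blast
  have bound: "norm (wave_remainder \<phi> n \<xi> \<eta> \<xi>' \<eta>')
      \<le> \<Phi> / (norm \<eta> * norm \<eta>') * remainder_bound \<kappa> \<xi> \<eta> \<xi>' \<eta>'"
    if "0 \<le> \<kappa>" "\<kappa> \<le> 1" "0 \<le> \<xi>" "0 \<le> \<xi>'" "\<eta> \<noteq> 0" "\<eta>' \<noteq> 0"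
      "rpow \<bar>\<xi> - norm \<eta>\<bar> \<kappa> \<noteq> 0" "rpow \<bar>\<xi>' - norm \<eta>'\<bar> \<kappa> \<noteq> 0" for n \<xi> \<eta> \<xi>' \<eta>' \<kappa>
    using that by (intro norm_wave_remainder_le[OF \<phi>_cont _ \<phi>_le] \<phi>_vanish)
  show ?thesis
    unfolding remainder_bound_def[symmetric]
    by (intro exI[of _ "wave_remainder \<phi>"] conjI allI impI exI[of _ \<Phi>] LHS_eq_wave_remainder)
      (blast intro: bound)
qed

end
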